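(* Let $(\Re, S, V)$ be a $V$-complete vector $S$-metric space, where $V$ is Archimedean. Let $K:\Re\to\Re$ be a map such that $K^2=K\circ K$ is continuous, and let $f:\Re\to\Re$ be a map commuting with $K$ (i.e. $fK=Kf$). Suppose: (i) $fK(\Re)\subseteq K^2(\Re)$; (ii) there is a constant $q\in[0,\tfrac13)$ such that for all $x,y\in\Re$, \[ S(fx,fx,fy)\preceq q\,U(x,x,y) \] for some \[ U(x,x,y)\in\Big\{S(Kx,Kx,Ky),\ S(Kx,Kx,fx),\ S(Ky,Ky,fy),\ \tfrac13\big[S(Kx,Kx,fy)+S(Ky,Ky,fx)\big]\Big\}; \] (iii) $K(\Re)$ or $f(\Re)$ is $V$-complete as a subspace of $\Re$. Then $K$ and $f$ have a unique common fixed point.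
   Context: A vector lattice (Riesz space) $V$ is a real vector space with a partial order $\preceq$ compatible with the linear structure ($p_1 \preceq p_2 \Rightarrow p_1+p_3 \preceq p_2+p_3$ and $\omega p_1 \preceq \omega p_2$ for real $\omega>0$) in which every two-element set has a supremum and an infimum. $V$ is Archimedean if $\inf\{\tfrac{1}{m}v : m \in \mathbb{N}\} = 0$ for every $v \in V^+=\{v\in V: v\succeq 0\}$. For a sequence $(\mu_n)$ in $V$, $\mu_n \downarrow 0$ means $(\mu_n)$ is decreasing with $\inf_n \mu_n = 0$. A vector $S$-metric on a nonempty set $\Re$ is a map $S:\Re\times\Re\times\Re\to V$ such that for all $x,y,z,a\in\Re$: (a) $S(x,y,z)\succeq 0$; (b) $S(x,y,z)=0$ iff $x=y=z$; (c) $S(x,y,z)\preceq S(x,y,a)+S(y,y,a)+S(z,z,a)$. The triple $(\Re,S,V)$ is a vector $S$-metric space. A sequence $(x_n)$ in $\Re$ $V$-converges to $x\in\Re$ (written $x_n \xrightarrow{S,V} x$) if there is a sequence $(\mu_n)$ in $V$ with $\mu_n\downarrow 0$ and $S(x_n,x_n,x)\preceq \mu_n$ for all $n$. It is $V$-Cauchy if there is $(\mu_n)$ in $V$ with $\mu_n\downarrow 0$ and $S(x_n,x_n,x_{n+q})\preceq\mu_n$ for all $n$ and all $q$. The space (or a subset of it) is $V$-complete if every $V$-Cauchy sequence in it $V$-converges to a limit in it. A map $T:\Re\to\Re$ is continuous if $x_n\xrightarrow{S,V}x$ implies $Tx_n\xrightarrow{S,V}Tx$. *)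

theory Defs
  imports Main "HOL-Analysis.Analysis"
begin

definition is_inf_of :: "'v::order set \<Rightarrow> 'v \<Rightarrow> bool" where
  "is_inf_of A a \<longleftrightarrow> (\<forall>x\<in>A. a \<le> x) \<and> (\<forall>b. (\<forall>x\<in>A. b \<le> x) \<longrightarrow> b \<le> a)"

definition archimedean_vl :: "'v::{ordered_real_vector, lattice} itself \<Rightarrow> bool" where
  "archimedean_vl _ \<longleftrightarrow>
     (\<forall>v::'v. 0 \<le> v \<longrightarrow> is_inf_of {(1 / real m) *\<^sub>R v | m::nat. m \<ge> 1} 0)"

definition decr_to_zero :: "(nat \<Rightarrow> 'v::{ordered_real_vector, lattice}) \<Rightarrow> bool" where
  "decr_to_zero \<mu> \<longleftrightarrow> (\<forall>n. \<mu> (Suc n) \<le> \<mu> n) \<and> is_inf_of (range \<mu>) 0"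

definition vector_S_metric :: "('a \<Rightarrow> 'a \<Rightarrow> 'a \<Rightarrow> 'v::{ordered_real_vector, lattice}) \<Rightarrow> bool" where
  "vector_S_metric S \<longleftrightarrow>
     (\<forall>x y z. 0 \<le> S x y z) \<and>
     (\<forall>x y z. S x y z = 0 \<longleftrightarrow> x = y \<and> y = z) \<and>
     (\<forall>x y z a. S x y z \<le> S x y a + S y y a + S z z a)"

definition V_conv :: "('a \<Rightarrow> 'a \<Rightarrow> 'a \<Rightarrow> 'v::{ordered_real_vector, lattice}) \<Rightarrow> (nat \<Rightarrow> 'a) \<Rightarrow> 'a \<Rightarrow> bool" where
  "V_conv S x l \<longleftrightarrow> (\<exists>\<mu>. decr_to_zero \<mu> \<and> (\<forall>n. S (x n) (x n) l \<le> \<mu> n))"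

definition V_Cauchy :: "('a \<Rightarrow> 'a \<Rightarrow> 'a \<Rightarrow> 'v::{ordered_real_vector, lattice}) \<Rightarrow> (nat \<Rightarrow> 'a) \<Rightarrow> bool" where
  "V_Cauchy S x \<longleftrightarrow> (\<exists>\<mu>. decr_to_zero \<mu> \<and> (\<forall>n q. S (x n) (x n) (x (n + q)) \<le> \<mu> n))"

definition V_complete_on :: "('a \<Rightarrow> 'a \<Rightarrow> 'a \<Rightarrow> 'v::{ordered_real_vector, lattice}) \<Rightarrow> 'a set \<Rightarrow> bool" where
  "V_complete_on S A \<longleftrightarrow>
     (\<forall>x. (\<forall>n. x n \<in> A) \<longrightarrow> V_Cauchy S x \<longrightarrow> (\<exists>l\<in>A. V_conv S x l))"

definition V_continuous :: "('a \<Rightarrow> 'a \<Rightarrow> 'a \<Rightarrow> 'v::{ordered_real_vector, lattice}) \<Rightarrow> ('a \<Rightarrow> 'a) \<Rightarrow> bool" where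
  "V_continuous S T \<longleftrightarrow> (\<forall>x l. V_conv S x l \<longrightarrow> V_conv S (\<lambda>n. T (x n)) (T l))"

end

theory Submission
  imports Defs
begin

text \<open>The Jungck iteration \<open>f (w n) = K (w (n + 1))\<close> makes the values \<open>f (w n)\<close> contract
  geometrically, so they form a V-Cauchy sequence; its limit \<open>z\<close> gives, through the continuity
  of \<open>K \<circ> K\<close> and the commutation \<open>f K = K f\<close>, a coincidence point \<open>K z\<close> of \<open>K\<close> and \<open>f\<close>.
  The contraction condition forces \<open>f\<close> to take the same value at any two coincidence points,
  and this value is then the unique common fixed point.\<close>

lemma le_zero_if_le_scaleR_decr_to_zero:
  fixes v :: "'v::{ordered_real_vector, lattice}"
  assumes "decr_to_zero \<mu>" "0 < c" "\<And>n. v \<le> c *\<^sub>R \<mu> n"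
  shows "v \<le> 0"
proof -
  have "(1/c) *\<^sub>R v \<le> (1/c) *\<^sub>R (c *\<^sub>R \<mu> n)" for n
    using assms(2,3) by (intro scaleR_left_mono) auto
  then have "(1/c) *\<^sub>R v \<le> \<mu> n" for n
    using assms(2) by simp
  then have "(1/c) *\<^sub>R v \<le> 0"
    using assms(1) unfolding decr_to_zero_def is_inf_of_def by blast
  then show ?thesis
    using assms(2) by (simp add: scaleR_le_0_iff)
qed

lemma eq_zero_if_le_scaleR_self:
  fixes v :: "'v::ordered_real_vector"
  assumes "0 \<le> v" "v \<le> c *\<^sub>R v" "c < 1"
  shows "v = 0"
proof -
  have "(1 - c) *\<^sub>R v \<le> 0"
    using assms(2) by (simp add: scaleR_diff_left)
  then have "v \<le> 0"
    using assms(3) by (simp add: scaleR_le_0_iff)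
  with assms(1) show ?thesis by simp
qed

lemma le_scaleR_if_le_absorb:
  fixes a b :: "'v::ordered_real_vector"
  assumes "0 \<le> b" "a \<le> s *\<^sub>R a + r *\<^sub>R b" "s < 1" "r \<le> c * (1 - s)"
  shows "a \<le> c *\<^sub>R b"
proof -
  have "(1 - s) *\<^sub>R a \<le> r *\<^sub>R b"
    using assms(2) by (simp add: algebra_simps)
  also have "\<dots> \<le> (c * (1 - s)) *\<^sub>R b"
    using assms(1,4) by (rule scaleR_right_mono[rotated])
  also have "\<dots> = (1 - s) *\<^sub>R (c *\<^sub>R b)"
    by (simp add: mult.commute)
  finally show ?thesis
    using assms(3) by (subst (asm) scaleR_le_cancel_left_pos) auto
qed

lemma decr_to_zero_geometric:
  fixes v :: "'v::{ordered_real_vector, lattice}"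
  assumes arch: "archimedean_vl TYPE('v)" and v: "0 \<le> v" and q: "0 \<le> q" "q < 1"
  shows "decr_to_zero (\<lambda>n. q ^ n *\<^sub>R v)"
  unfolding decr_to_zero_def is_inf_of_def
proof (intro conjI allI ballI impI)
  fix n
  have "q ^ Suc n \<le> q ^ n"
    using power_decreasing[of n "Suc n" q] q by simp
  then show "q ^ Suc n *\<^sub>R v \<le> q ^ n *\<^sub>R v"
    using v by (rule scaleR_right_mono)
next
  fix x assume "x \<in> range (\<lambda>n. q ^ n *\<^sub>R v)"
  then show "0 \<le> x"
    using v q by (auto intro: scaleR_nonneg_nonneg)
next
  fix b assume below: "\<forall>x\<in>range (\<lambda>n. q ^ n *\<^sub>R v). b \<le> x"
  have "b \<le> (1 / real m) *\<^sub>R v" if m: "m \<ge> 1" for m :: nat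
  proof -
    obtain n where "q ^ n < 1 / real m"
      using real_arch_pow_inv[of "1 / real m" q] m q(2) by auto
    then have "q ^ n *\<^sub>R v \<le> (1 / real m) *\<^sub>R v"
      using v by (intro scaleR_right_mono) auto
    moreover have "b \<le> q ^ n *\<^sub>R v"
      using below by blast
    ultimately show ?thesis
      by (rule order_trans[rotated])
  qed
  moreover have "is_inf_of {(1 / real m) *\<^sub>R v | m::nat. m \<ge> 1} 0"
    using arch v unfolding archimedean_vl_def by blast
  ultimately show "b \<le> 0"
    unfolding is_inf_of_def by blast
qed

lemma jungck_sequence:
  assumes "f ` A \<subseteq> K ` A" "a \<in> A"
  obtains w where "\<And>n. f (w n) = K (w (Suc n))"
proof -
  have "\<forall>x\<in>A. \<exists>y. y \<in> A \<and> f x = K y"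
    using assms(1) by blast
  then obtain g where g: "\<forall>x\<in>A. g x \<in> A \<and> f x = K (g x)"
    by (rule bchoice[THEN exE])
  have in_A: "(g ^^ n) a \<in> A" for n
  proof (induction n)
    case (Suc n)
    then show ?case
      using g by simp
  qed (use assms(2) in simp)
  show ?thesis
  proof (rule that)
    show "f ((g ^^ n) a) = K ((g ^^ Suc n) a)" for n
      using g in_A[of n] by simp
  qed
qed

locale vector_S_metric_space =
  fixes S :: "'a \<Rightarrow> 'a \<Rightarrow> 'a \<Rightarrow> 'v::{ordered_real_vector, lattice}"
  assumes vector_S_metric: "vector_S_metric S"
begin

lemma S_nonneg: "0 \<le> S x y z"
  using vector_S_metric unfolding vector_S_metric_def by auto

lemma S_eq_0_iff: "S x x y = 0 \<longleftrightarrow> x = y"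
  using vector_S_metric unfolding vector_S_metric_def by auto

lemma S_self [simp]: "S x x x = 0"
  by (simp add: S_eq_0_iff)

lemma S_triangle: "S x x y \<le> 2 *\<^sub>R S x x a + S y y a"
  using vector_S_metric unfolding vector_S_metric_def by (simp add: scaleR_2)

lemma S_commute: "S x x y = S y y x"
proof (rule order_antisym)
  show "S x x y \<le> S y y x"
    using S_triangle[of x y x] by simp
  show "S y y x \<le> S x x y"
    using S_triangle[of y x y] by simp
qed

lemma S_telescope:
  "S (y n) (y n) (y (n + m)) \<le> 2 *\<^sub>R (\<Sum>k<m. S (y (n + k)) (y (n + k)) (y (Suc (n + k))))"
proof (induction m arbitrary: n)
  case 0
  then show ?case by simp
next
  case (Suc m)
  have "S (y n) (y n) (y (n + Suc m))
      \<le> 2 *\<^sub>R S (y n) (y n) (y (Suc n)) + S (y (Suc n)) (y (Suc n)) (y (Suc n + m))"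
    using S_triangle[of "y n" "y (n + Suc m)" "y (Suc n)"] S_commute[of "y (n + Suc m)" "y (Suc n)"] by simp
  also have "\<dots> \<le> 2 *\<^sub>R S (y n) (y n) (y (Suc n))
      + 2 *\<^sub>R (\<Sum>k<m. S (y (Suc n + k)) (y (Suc n + k)) (y (Suc (Suc n + k))))"
    using Suc.IH by (rule add_left_mono)
  finally show ?case
    by (simp only: sum.lessThan_Suc_shift scaleR_right_distrib add_0_right add_Suc_right add_Suc)
qed

lemma V_Cauchy_if_geometric:
  assumes arch: "archimedean_vl TYPE('v)" and q: "0 \<le> q" "q < 1"
    and step: "\<And>n. S (y (Suc n)) (y (Suc n)) (y (Suc (Suc n))) \<le> q *\<^sub>R S (y n) (y n) (y (Suc n))"
  shows "V_Cauchy S y"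
proof -
  define d where "d n = S (y n) (y n) (y (Suc n))" for n
  have d_geometric: "d n \<le> q ^ n *\<^sub>R d 0" for n
  proof (induction n)
    case (Suc n)
    have "d (Suc n) \<le> q *\<^sub>R d n"
      unfolding d_def by (rule step)
    also have "\<dots> \<le> q *\<^sub>R (q ^ n *\<^sub>R d 0)"
      by (intro scaleR_left_mono Suc q(1))
    finally show ?case by simp
  qed simp
  have geometric_sum: "(\<Sum>k<m. q ^ (n + k)) \<le> q ^ n / (1 - q)" for m n
  proof -
    have "(\<Sum>k<m. q ^ k) = (1 - q ^ m) / (1 - q)"
      using q by (simp add: sum_gp_strict)
    also have "\<dots> \<le> 1 / (1 - q)"
      using q by (intro divide_right_mono) auto
    finally have "q ^ n * (\<Sum>k<m. q ^ k) \<le> q ^ n * (1 / (1 - q))"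
      using q by (intro mult_left_mono) auto
    then show ?thesis
      by (simp add: power_add sum_distrib_left)
  qed
  define \<mu> where "\<mu> n = q ^ n *\<^sub>R ((2 / (1 - q)) *\<^sub>R d 0)" for n
  have "0 \<le> (2 / (1 - q)) *\<^sub>R d 0"
    using q S_nonneg unfolding d_def by (intro scaleR_nonneg_nonneg) auto
  then have "decr_to_zero \<mu>"
    unfolding \<mu>_def using q by (intro decr_to_zero_geometric[OF arch])
  moreover have "S (y n) (y n) (y (n + m)) \<le> \<mu> n" for n m
  proof -
    have "S (y n) (y n) (y (n + m)) \<le> 2 *\<^sub>R (\<Sum>k<m. d (n + k))"
      unfolding d_def by (rule S_telescope)
    also have "\<dots> \<le> 2 *\<^sub>R (\<Sum>k<m. q ^ (n + k) *\<^sub>R d 0)"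
      by (intro scaleR_left_mono sum_mono d_geometric) simp
    also have "\<dots> = (2 * (\<Sum>k<m. q ^ (n + k))) *\<^sub>R d 0"
      by (simp add: scaleR_sum_left[symmetric])
    also have "\<dots> \<le> (2 * (q ^ n / (1 - q))) *\<^sub>R d 0"
      by (intro scaleR_right_mono mult_left_mono geometric_sum) (simp_all add: d_def S_nonneg)
    also have "\<dots> = \<mu> n"
      by (simp add: \<mu>_def)
    finally show ?thesis .
  qed
  ultimately show ?thesis
    unfolding V_Cauchy_def by blast
qed

end

locale jungck_contraction = vector_S_metric_space S
  for S :: "'a \<Rightarrow> 'a \<Rightarrow> 'a \<Rightarrow> 'v::{ordered_real_vector, lattice}" +
  fixes K f :: "'a \<Rightarrow> 'a" and q :: real
  assumes q_nonneg: "0 \<le> q" and q_less_1: "q < 1"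
    and contraction: "\<And>x y. \<exists>U \<in> {S (K x) (K x) (K y), S (K x) (K x) (f x), S (K y) (K y) (f y),
                               (1/3) *\<^sub>R (S (K x) (K x) (f y) + S (K y) (K y) (f x))}.
                  S (f x) (f x) (f y) \<le> q *\<^sub>R U"
begin

lemma contraction_cases:
  obtains "S (f x) (f x) (f y) \<le> q *\<^sub>R S (K x) (K x) (K y)"
  | "S (f x) (f x) (f y) \<le> q *\<^sub>R S (K x) (K x) (f x)"
  | "S (f x) (f x) (f y) \<le> q *\<^sub>R S (K y) (K y) (f y)"
  | "S (f x) (f x) (f y) \<le> (q/3) *\<^sub>R (S (K x) (K x) (f y) + S (K y) (K y) (f x))"
  using contraction[of x y] by auto

lemma coincidence_values_eq:
  assumes "K x = f x" "K y = f y"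
  shows "f x = f y"
proof -
  let ?v = "S (f x) (f x) (f y)"
  obtain c where c: "c < 1" "?v \<le> c *\<^sub>R ?v"
  proof (cases rule: contraction_cases[of x y])
    case 1
    then show ?thesis using that[of q] assms q_less_1 by simp
  next
    case 2
    then show ?thesis using that[of 0] assms by simp
  next
    case 3
    then show ?thesis using that[of 0] assms by simp
  next
    case 4
    moreover have "S (K x) (K x) (f y) = ?v" "S (K y) (K y) (f x) = ?v"
      using assms S_commute[of "f y" "f x"] by simp_all
    ultimately have "?v \<le> (q/3) *\<^sub>R (?v + ?v)"
      by simp
    then have "?v \<le> (q * 2 / 3) *\<^sub>R ?v"
      by (simp add: scaleR_2[symmetric])
    then show ?thesis
      using that[of "q * 2 / 3"] q_less_1 by simp
  qed
  have "?v = 0"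
    by (rule eq_zero_if_le_scaleR_self[OF S_nonneg c(2,1)])
  then show ?thesis
    by (simp add: S_eq_0_iff)
qed

lemma common_fixed_point_unique:
  assumes "K z = z" "f z = z" "K w = w" "f w = w"
  shows "z = w"
  using coincidence_values_eq[of z w] assms by simp

lemma common_fixed_point_of_coincidence:
  assumes commute: "\<And>x. f (K x) = K (f x)" and "f a = K a"
  shows "K (f a) = f a \<and> f (f a) = f a"
proof -
  have "K (f a) = f (K a)"
    by (simp add: commute)
  also have "\<dots> = f (f a)"
    by (simp add: assms(2))
  finally have coincidence: "K (f a) = f (f a)" .
  moreover have "f (f a) = f a"
    by (rule coincidence_values_eq[OF coincidence assms(2)[symmetric]])
  ultimately show ?thesis
    by simp
qed

lemma jungck_step_contracts:
  assumes w: "\<And>n. f (w n) = K (w (Suc n))"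
  shows "S (f (w (Suc n))) (f (w (Suc n))) (f (w (Suc (Suc n))))
    \<le> q *\<^sub>R S (f (w n)) (f (w n)) (f (w (Suc n)))"
    (is "?d' \<le> q *\<^sub>R ?d")
proof (cases rule: contraction_cases[of "w (Suc n)" "w (Suc (Suc n))"])
  case 1
  then show ?thesis by (simp flip: w)
next
  case 2
  then show ?thesis
    using q_nonneg S_nonneg by (simp flip: w add: scaleR_nonneg_nonneg)
next
  case 3
  then have absorb: "?d' \<le> q *\<^sub>R ?d' + 0 *\<^sub>R ?d"
    by (simp flip: w)
  show ?thesis
    using le_scaleR_if_le_absorb[OF S_nonneg absorb] q_nonneg q_less_1 by simp
next
  case 4
  have "S (f (w n)) (f (w n)) (f (w (Suc (Suc n)))) \<le> 2 *\<^sub>R ?d + ?d'"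
    using S_triangle[of "f (w n)" "f (w (Suc (Suc n)))" "f (w (Suc n))"]
      S_commute[of "f (w (Suc (Suc n)))" "f (w (Suc n))"] by simp
  then have "(q/3) *\<^sub>R S (f (w n)) (f (w n)) (f (w (Suc (Suc n)))) \<le> (q/3) *\<^sub>R (2 *\<^sub>R ?d + ?d')"
    using q_nonneg by (intro scaleR_left_mono) auto
  with 4 have absorb: "?d' \<le> (q/3) *\<^sub>R ?d' + (2 * q / 3) *\<^sub>R ?d"
    by (simp flip: w add: algebra_simps)
  have "q * q \<le> q"
    using mult_left_le_one_le[of q q] q_nonneg q_less_1 by simp
  then have "2 * q / 3 \<le> q * (1 - q / 3)"
    by (simp add: field_simps)
  then show ?thesis
    using le_scaleR_if_le_absorb[OF S_nonneg absorb, of q] q_less_1 by simp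
qed

text \<open>The right-hand side vanishes as soon as \<open>K X\<close> and \<open>f X\<close> both approach \<open>K p\<close>.\<close>

lemma coincidence_defect_bound:
  "(1 - q) *\<^sub>R S (K p) (K p) (f p)
    \<le> (2 + q) *\<^sub>R S (f X) (f X) (K p) + (2 * q) *\<^sub>R S (K X) (K X) (K p)"
proof -
  define D where "D = S (K p) (K p) (f p)"
  define \<alpha> where "\<alpha> = S (K X) (K X) (K p)"
  define \<beta> where "\<beta> = S (f X) (f X) (K p)"
  define E where "E = D + 2 *\<^sub>R \<alpha> + \<beta>"
  have nonneg: "0 \<le> D" "0 \<le> \<alpha>" "0 \<le> \<beta>"
    unfolding D_def \<alpha>_def \<beta>_def by (simp_all add: S_nonneg)
  have le_E: "\<alpha> \<le> E" "2 *\<^sub>R \<alpha> + \<beta> \<le> E" "D \<le> E" "0 \<le> E"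
    unfolding E_def using nonneg by (auto simp: scaleR_2 intro: add_increasing add_increasing2)
  have "S (f X) (f X) (f p) \<le> q *\<^sub>R E"
  proof (cases rule: contraction_cases[of X p])
    case 1
    then show ?thesis
      unfolding \<alpha>_def[symmetric] using le_E(1) q_nonneg by (meson order_trans scaleR_left_mono)
  next
    case 2
    moreover have "S (K X) (K X) (f X) \<le> 2 *\<^sub>R \<alpha> + \<beta>"
      unfolding \<alpha>_def \<beta>_def by (rule S_triangle)
    ultimately show ?thesis
      using le_E(2) q_nonneg by (meson order_trans scaleR_left_mono)
  next
    case 3
    then show ?thesis
      unfolding D_def[symmetric] using le_E(3) q_nonneg by (meson order_trans scaleR_left_mono)
  next
    case 4
    have "S (K X) (K X) (f p) \<le> 2 *\<^sub>R \<alpha> + D"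
      unfolding \<alpha>_def D_def using S_triangle[of "K X" "f p" "K p"] S_commute[of "f p" "K p"] by simp
    then have "S (K X) (K X) (f p) + S (K p) (K p) (f X) \<le> (2 *\<^sub>R \<alpha> + D) + \<beta>"
      unfolding \<beta>_def S_commute[of "K p" "f X"] by (rule add_right_mono)
    also have "\<dots> = E"
      by (simp add: E_def algebra_simps)
    finally have "(q/3) *\<^sub>R (S (K X) (K X) (f p) + S (K p) (K p) (f X)) \<le> (q/3) *\<^sub>R E"
      using q_nonneg by (intro scaleR_left_mono) auto
    also have "\<dots> \<le> q *\<^sub>R E"
      using le_E(4) q_nonneg by (intro scaleR_right_mono) auto
    finally show ?thesis
      by (rule order_trans[OF 4])
  qed
  then have "D \<le> 2 *\<^sub>R \<beta> + q *\<^sub>R E"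
    using S_triangle[of "K p" "f p" "f X"] S_commute[of "K p" "f X"] S_commute[of "f p" "f X"]
    unfolding D_def \<beta>_def by (metis add_left_mono order_trans)
  also have "\<dots> = q *\<^sub>R D + ((2 + q) *\<^sub>R \<beta> + (2 * q) *\<^sub>R \<alpha>)"
    by (simp add: E_def algebra_simps)
  finally have "D - q *\<^sub>R D \<le> (2 + q) *\<^sub>R \<beta> + (2 * q) *\<^sub>R \<alpha>"
    by (simp add: algebra_simps)
  then show ?thesis
    unfolding D_def \<alpha>_def \<beta>_def by (simp add: scaleR_diff_left)
qed

lemma coincidence_point_of_limit:
  assumes commute: "\<And>x. f (K x) = K (f x)" and cont: "V_continuous S (K \<circ> K)"
    and w: "\<And>n. f (w n) = K (w (Suc n))" and lim: "V_conv S (\<lambda>n. f (w n)) z"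
  shows "f (K z) = K (K z)"
proof -
  obtain \<mu> where \<mu>: "decr_to_zero \<mu>"
    and conv: "\<And>n. S (K (K (f (w n)))) (K (K (f (w n)))) (K (K z)) \<le> \<mu> n"
    using cont lim unfolding V_continuous_def V_conv_def by fastforce
  let ?D = "S (K (K z)) (K (K z)) (f (K z))"
  have "(1 - q) *\<^sub>R ?D \<le> (2 + q + 2 * q) *\<^sub>R \<mu> n" for n
  proof -
    define X where "X = K (K (w (Suc n)))"
    have KX: "K X = K (K (f (w n)))"
      unfolding X_def by (simp add: w)
    have fX: "f X = K (K (f (w (Suc n))))"
      unfolding X_def by (simp add: commute)
    have "\<mu> (Suc n) \<le> \<mu> n"
      using \<mu> unfolding decr_to_zero_def by blast
    then have "S (f X) (f X) (K (K z)) \<le> \<mu> n"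
      unfolding fX using conv order_trans by blast
    moreover have "S (K X) (K X) (K (K z)) \<le> \<mu> n"
      unfolding KX by (rule conv)
    ultimately have "(2 + q) *\<^sub>R S (f X) (f X) (K (K z)) + (2 * q) *\<^sub>R S (K X) (K X) (K (K z))
        \<le> (2 + q) *\<^sub>R \<mu> n + (2 * q) *\<^sub>R \<mu> n"
      using q_nonneg by (intro add_mono scaleR_left_mono) auto
    also have "\<dots> = (2 + q + 2 * q) *\<^sub>R \<mu> n"
      by (rule scaleR_add_left[symmetric])
    finally show ?thesis
      using coincidence_defect_bound[of "K z" X] by (rule order_trans[rotated])
  qed
  then have "(1 - q) *\<^sub>R ?D \<le> 0"
    using q_nonneg by (intro le_zero_if_le_scaleR_decr_to_zero[OF \<mu>, of "2 + q + 2 * q"]) auto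
  then have "?D = 0"
    using q_less_1 S_nonneg by (simp add: scaleR_le_0_iff order_antisym)
  then show ?thesis
    by (simp add: S_eq_0_iff)
qed

end

theorem theorem2p4:
  fixes S :: "'a \<Rightarrow> 'a \<Rightarrow> 'a \<Rightarrow> 'v::{ordered_real_vector, lattice}"
    and K f :: "'a \<Rightarrow> 'a"
  assumes arch: "archimedean_vl TYPE('v)"
    and Smet: "vector_S_metric S"
    and compl: "V_complete_on S UNIV"
    and Kcont: "V_continuous S (K \<circ> K)"
    and comm: "f \<circ> K = K \<circ> f"
    and i: "(f \<circ> K) ` UNIV \<subseteq> (K \<circ> K) ` UNIV"
    and ii: "\<exists>q::real. 0 \<le> q \<and> q < 1/3 \<and>
              (\<forall>x y. \<exists>U \<in> {S (K x) (K x) (K y), S (K x) (K x) (f x), S (K y) (K y) (f y),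
                               (1/3) *\<^sub>R (S (K x) (K x) (f y) + S (K y) (K y) (f x))}.
                  S (f x) (f x) (f y) \<le> q *\<^sub>R U)"
    and iii: "V_complete_on S (K ` UNIV) \<or> V_complete_on S (f ` UNIV)"
  shows "\<exists>!z. K z = z \<and> f z = z"
proof -
  obtain q where "0 \<le> q" "q < 1/3" and "\<forall>x y. \<exists>U \<in> {S (K x) (K x) (K y), S (K x) (K x) (f x),
      S (K y) (K y) (f y), (1/3) *\<^sub>R (S (K x) (K x) (f y) + S (K y) (K y) (f x))}.
      S (f x) (f x) (f y) \<le> q *\<^sub>R U"
    using ii by blast
  then interpret jungck_contraction S K f q
    using Smet by unfold_locales auto
  have commute: "\<And>x. f (K x) = K (f x)"
    using comm by (metis comp_apply)
  have "f ` range K \<subseteq> K ` range K"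
    using i by (auto simp: image_comp)
  then obtain w where w: "\<And>n. f (w n) = K (w (Suc n))"
    using jungck_sequence rangeI by metis
  have "V_Cauchy S (\<lambda>n. f (w n))"
    using arch q_nonneg q_less_1 jungck_step_contracts[where w = w, OF w] by (rule V_Cauchy_if_geometric)
  then obtain z where "V_conv S (\<lambda>n. f (w n)) z"
    using compl unfolding V_complete_on_def by blast
  then have "f (K z) = K (K z)"
    by (rule coincidence_point_of_limit[where w = w, OF commute Kcont w])
  then have "K (f (K z)) = f (K z) \<and> f (f (K z)) = f (K z)"
    by (rule common_fixed_point_of_coincidence[OF commute])
  then show ?thesis
    using common_fixed_point_unique by blast
qed

end
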